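(* Fix $k\ge2$ and let $Z^{(1)},\dots,Z^{(k)}$ be independent copies of $Z$. Assume $\mathbb{E}\min_{1\le i\le k}Z^{(i)}=\infty$. Then, in the $k$-choice model, with probability one, $\liminf_{n\to\infty}\Lambda_n<\infty$.
   Context: Let $Z$ be a random variable on $\mathbb{N}=\{1,2,3,\dots\}$. Fix $k\ge2$ and let $(Z^{(1)}_n)_{n\ge1},\dots,(Z^{(k)}_n)_{n\ge1}$ be $k$ independent sequences of i.i.d. random variables, all distributed as $Z$ and mutually independent. The $k$-choice model: define $T_n=\{n\}$ for $n\le0$ and $T_n=\{n\}\cup\bigcup_{i=1}^k T_{n-Z^{(i)}_n}$ for $n\ge1$. Let $\mathcal{L}_n=T_n\cap\{0,-1,-2,\dots\}$ and $\Lambda_n=|\mathcal{L}_n|$. *)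

theory Defs
  imports "HOL-Probability.Probability"
begin

text \<open>The sample is encoded as z i m = Z^{(i+1)}_m for i < k, m \<ge> 1.
  T_n is the least set containing n and closed under passing from a node m \<ge> 1
  to its children m - Z^{(i)}_m; for Z \<ge> 1 this is exactly the recursive definition
  T_n = {n} for n \<le> 0 and T_n = {n} \<union> \<Union>_i T_{n - Z^{(i)}_n} for n \<ge> 1.\<close>

inductive_set kTree :: "nat \<Rightarrow> (nat \<Rightarrow> nat \<Rightarrow> nat) \<Rightarrow> int \<Rightarrow> int set"
  for k :: nat and z :: "nat \<Rightarrow> nat \<Rightarrow> nat" and n :: int where
  root: "n \<in> kTree k z n"
| step: "m \<in> kTree k z n \<Longrightarrow> m \<ge> 1 \<Longrightarrow> i < k \<Longrightarrow> m - int (z i (nat m)) \<in> kTree k z n"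

definition kLeaves :: "nat \<Rightarrow> (nat \<Rightarrow> nat \<Rightarrow> nat) \<Rightarrow> int \<Rightarrow> int set" where
  "kLeaves k z n = kTree k z n \<inter> {..0}"

definition kLambda :: "nat \<Rightarrow> (nat \<Rightarrow> nat \<Rightarrow> nat) \<Rightarrow> int \<Rightarrow> nat" where
  "kLambda k z n = card (kLeaves k z n)"

end

theory Submission
  imports Defs
begin

text \<open>Call \<open>n\<close> a cut point if all \<open>k\<close> jumps \<open>Z^(i)_n\<close> at \<open>n\<close> exceed \<open>n\<close>. Then \<open>T_n\<close> consists
  of \<open>n\<close> and its \<open>k\<close> non-positive children, so \<open>\<Lambda>_n \<le> k\<close>. The events "\<open>n\<close> is a cut point"
  are independent, with probabilities \<open>P(Z > n)^k\<close> summing to \<open>E(min_i Z^(i)) = \<infinity>\<close>, so by the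
  second Borel--Cantelli lemma almost surely infinitely many \<open>n\<close> are cut points.\<close>

lemma kLambda_le_if_jumps_exceed:
  fixes z :: "nat \<Rightarrow> nat \<Rightarrow> nat"
  assumes "n \<ge> 1" and "\<And>i. i < k \<Longrightarrow> n < z i n"
  shows "kLambda k z (int n) \<le> k"
proof -
  let ?children = "(\<lambda>i. int n - int (z i n)) ` {..<k}"
  have tree: "kTree k z (int n) \<subseteq> insert (int n) ?children"
  proof
    fix m assume "m \<in> kTree k z (int n)"
    then show "m \<in> insert (int n) ?children"
    proof induction
      case root
      then show ?case by simp
    next
      case (step m i)
      have "m = int n"
        using step assms(2) by force
      then show ?case using step by auto
    qed
  qed
  have "kLeaves k z (int n) \<subseteq> ?children"
    using tree assms(1) unfolding kLeaves_def by force
  then have "kLambda k z (int n) \<le> card ?children"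
    unfolding kLambda_def by (intro card_mono) auto
  also have "\<dots> \<le> k"
    using card_image_le[of "{..<k}"] by simp
  finally show ?thesis .
qed

lemma ennreal_of_nat_eq_suminf_less:
  "ennreal (real m) = (\<Sum>n. of_bool (n < m))"
proof -
  have "(\<Sum>n. of_bool (n < m)) = (\<Sum>n<m. of_bool (n < m) :: ennreal)"
    by (rule suminf_finite) auto
  also have "\<dots> = of_nat m"
    by simp
  finally show ?thesis
    by (simp add: ennreal_of_nat_eq_real_of_nat)
qed

lemma nn_integral_Min_Pi_pmf:
  fixes p :: "nat pmf"
  assumes "finite I" and "I \<noteq> {}"
  shows "(\<integral>\<^sup>+ x. ennreal (real (Min (x ` I))) \<partial>measure_pmf (Pi_pmf I d (\<lambda>_. p)))
       = (\<Sum>n. ennreal (measure_pmf.prob p {n<..} ^ card I))"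
proof -
  let ?P = "measure_pmf (Pi_pmf I d (\<lambda>_. p))"
  have Min_greater: "{x. n < Min (x ` I)} = Pi I (\<lambda>_. {n<..})" for n
    using assms by (auto simp: Pi_def)
  have "(\<integral>\<^sup>+ x. ennreal (real (Min (x ` I))) \<partial>?P)
      = (\<integral>\<^sup>+ x. (\<Sum>n. indicator {x. n < Min (x ` I)} x) \<partial>?P)"
    by (simp only: ennreal_of_nat_eq_suminf_less) (simp add: indicator_def)
  also have "\<dots> = (\<Sum>n. emeasure ?P {x. n < Min (x ` I)})"
    by (subst nn_integral_suminf) simp_all
  also have "\<dots> = (\<Sum>n. ennreal (measure_pmf.prob p {n<..} ^ card I))"
    using assms(1)
    by (simp add: Min_greater measure_pmf.emeasure_eq_measure measure_Pi_pmf_Pi)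
  finally show ?thesis .
qed

lemma liminf_le_if_infinitely_le:
  fixes f :: "nat \<Rightarrow> 'a :: complete_linorder"
  assumes "infinite {n. f n \<le> c}"
  shows "liminf f \<le> c"
  unfolding liminf_SUP_INF
proof (rule SUP_least)
  fix N
  obtain n where "n \<ge> N" and "f n \<le> c"
    using assms by (auto simp: infinite_nat_iff_unbounded_le)
  then show "(INF m\<in>{N..}. f m) \<le> c"
    by (intro INF_lower2[of n]) auto
qed

lemma (in prob_space) indep_events_compl_prod:
  assumes "indep_events E I" and "J \<subseteq> I" "finite J" "J \<noteq> {}"
  shows "prob (\<Inter>n\<in>J. space M - E n) = (\<Prod>n\<in>J. 1 - prob (E n))"
proof -
  have events: "E n \<in> events" if "n \<in> I" for n
    using assms(1) that by (auto simp: indep_events_def)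
  have "indep_sets (\<lambda>n. sigma_sets (space M) {E n}) I"
    using assms(1) unfolding indep_events_def_alt
    by (rule indep_sets_sigma) (simp add: Int_stable_def)
  then have "prob (\<Inter>n\<in>J. space M - E n) = (\<Prod>n\<in>J. prob (space M - E n))"
    using assms(2,4,3) by (rule indep_setsD) (auto intro: sigma_sets.Compl sigma_sets.Basic)
  also have "\<dots> = (\<Prod>n\<in>J. 1 - prob (E n))"
    using assms(2) events by (intro prod.cong) (auto simp: prob_compl)
  finally show ?thesis .
qed

lemma (in prob_space) prob_INT_compl_le_exp:
  assumes "indep_events E I" and "J \<subseteq> I" "finite J" "J \<noteq> {}"
  shows "prob (\<Inter>n\<in>J. space M - E n) \<le> exp (- (\<Sum>n\<in>J. prob (E n)))"
proof -
  have "prob (\<Inter>n\<in>J. space M - E n) = (\<Prod>n\<in>J. 1 - prob (E n))"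
    using assms by (rule indep_events_compl_prod)
  also have "\<dots> \<le> (\<Prod>n\<in>J. exp (- prob (E n)))"
    by (intro prod_mono) (auto simp: exp_ge_add_one_self[of "- prob _", simplified])
  also have "\<dots> = exp (- (\<Sum>n\<in>J. prob (E n)))"
    using assms(3) by (simp add: exp_sum[symmetric] sum_negf)
  finally show ?thesis .
qed

theorem (in prob_space) second_borel_cantelli:
  assumes indep: "indep_events E UNIV" and diverges: "\<not> summable (\<lambda>n. prob (E n))"
  shows "AE \<omega> in M. infinite {n. \<omega> \<in> E n}"
proof -
  define B where "B N = (\<Inter>n\<in>{N..}. space M - E n)" for N
  have events: "E n \<in> events" for n
    using indep by (auto simp: indep_events_def)
  then have B_events: "B N \<in> events" for N
    unfolding B_def by (intro sets.countable_INT') auto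
  have "prob (B N) = 0" for N
  proof (rule ccontr)
    assume "prob (B N) \<noteq> 0"
    then have pos: "prob (B N) > 0"
      using measure_nonneg[of M "B N"] by linarith
    have tail_bounded: "(\<Sum>n\<in>{N..<m}. prob (E n)) \<le> - ln (prob (B N))" for m
    proof (cases "N < m")
      case False
      then show ?thesis using pos by simp
    next
      case True
      have "prob (B N) \<le> prob (\<Inter>n\<in>{N..<m}. space M - E n)"
        using True events by (intro finite_measure_mono) (auto simp: B_def)
      also have "\<dots> \<le> exp (- (\<Sum>n\<in>{N..<m}. prob (E n)))"
        using True by (intro prob_INT_compl_le_exp[OF indep]) auto
      finally have "ln (prob (B N)) \<le> - (\<Sum>n\<in>{N..<m}. prob (E n))"
        using pos by (metis ln_exp ln_le_cancel_iff exp_gt_zero)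
      then show ?thesis
        by simp
    qed
    have "summable (\<lambda>n. prob (E n))"
    proof (rule summableI_nonneg_bounded)
      fix m
      have "(\<Sum>n<m. prob (E n)) \<le> (\<Sum>n\<in>{..<N} \<union> {N..<m}. prob (E n))"
        by (intro sum_mono2) auto
      also have "\<dots> = (\<Sum>n<N. prob (E n)) + (\<Sum>n\<in>{N..<m}. prob (E n))"
        by (intro sum.union_disjoint) auto
      also have "\<dots> \<le> (\<Sum>n<N. prob (E n)) - ln (prob (B N))"
        using tail_bounded[of m] by simp
      finally show "(\<Sum>n<m. prob (E n)) \<le> (\<Sum>n<N. prob (E n)) - ln (prob (B N))" .
    qed simp
    with diverges show False ..
  qed
  then have "(\<Union>N. B N) \<in> null_sets M"
    using B_events by (intro null_sets_UN) (simp add: null_sets_def emeasure_eq_measure)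
  then show ?thesis
    by (rule AE_I') (auto simp: B_def infinite_nat_iff_unbounded_le)
qed

locale iid_array = prob_space M for M :: "'a measure" +
  fixes k :: nat and p :: "nat pmf" and X :: "nat \<Rightarrow> nat \<Rightarrow> 'a \<Rightarrow> nat"
  assumes X_measurable: "\<And>i n. i < k \<Longrightarrow> n \<ge> 1 \<Longrightarrow> X i n \<in> measurable M (count_space UNIV)"
    and distr_X: "\<And>i n. i < k \<Longrightarrow> n \<ge> 1 \<Longrightarrow> distr M (count_space UNIV) (X i n) = measure_pmf p"
    and indep_X: "indep_vars (\<lambda>_. count_space UNIV) (\<lambda>(i, n). X i n) ({..<k} \<times> {1..})"
begin

definition cut_event :: "nat \<Rightarrow> 'a set" where
  "cut_event n = {\<omega> \<in> space M. \<forall>i<k. n < X i n \<omega>}"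

lemma prob_exceed:
  assumes "i < k" and "n \<ge> 1"
  shows "prob (X i n -` {m<..} \<inter> space M) = measure_pmf.prob p {m<..}"
  using assms X_measurable distr_X measure_distr[of "X i n" M "count_space UNIV" "{m<..}"]
  by simp

lemma prob_cut_event:
  assumes "n \<ge> 1"
  shows "prob (cut_event n) = measure_pmf.prob p {n<..} ^ k"
proof (cases "k = 0")
  case True
  then show ?thesis unfolding cut_event_def by (simp add: prob_space)
next
  case False
  let ?J = "{..<k} \<times> {n}"
  define Y where "Y = (\<lambda>(i, n). X i n)"
  have "cut_event n = (\<Inter>j\<in>?J. Y j -` {snd j<..} \<inter> space M)"
    using False by (auto simp: cut_event_def Y_def)
  also have "prob \<dots> = (\<Prod>j\<in>?J. prob (Y j -` {snd j<..} \<inter> space M))"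
    using False assms indep_X unfolding Y_def by (intro indep_varsD) auto
  also have "\<dots> = (\<Prod>j\<in>?J. measure_pmf.prob p {n<..})"
    using assms by (intro prod.cong) (auto simp: Y_def prob_exceed)
  finally show ?thesis
    by (simp add: card_cartesian_product)
qed

lemma indep_cut_events: "indep_events (\<lambda>n. cut_event (Suc n)) UNIV"
proof -
  define K where "K n = {..<k} \<times> {Suc n}" for n
  define Y where "Y = (\<lambda>(i, n). X i n)"
  have "indep_vars (\<lambda>n. PiM (K n) (\<lambda>_. count_space UNIV))
      (\<lambda>n \<omega>. restrict (\<lambda>j. Y j \<omega>) (K n)) UNIV"
    using indep_X unfolding Y_def
    by (rule indep_vars_restrict) (auto simp: K_def disjoint_family_on_def)
  then have "indep_events (\<lambda>n. {\<omega> \<in> space M. \<forall>i<k.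
      Suc n < restrict (\<lambda>j. Y j \<omega>) (K n) (i, Suc n)}) UNIV"
    by (rule indep_eventsI_indep_vars) (auto simp: K_def)
  moreover have "{\<omega> \<in> space M. \<forall>i<k. Suc n < restrict (\<lambda>j. Y j \<omega>) (K n) (i, Suc n)}
      = cut_event (Suc n)" for n
    by (auto simp: K_def Y_def cut_event_def)
  ultimately show ?thesis by simp
qed

lemma AE_infinitely_many_cut_events:
  assumes "(\<Sum>n. ennreal (measure_pmf.prob p {n<..} ^ k)) = \<infinity>"
  shows "AE \<omega> in M. infinite {n. \<omega> \<in> cut_event (Suc n)}"
proof (rule second_borel_cantelli[OF indep_cut_events])
  let ?q = "\<lambda>n. measure_pmf.prob p {n<..} ^ k"
  show "\<not> summable (\<lambda>n. prob (cut_event (Suc n)))"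
  proof
    assume "summable (\<lambda>n. prob (cut_event (Suc n)))"
    then have "summable ?q"
      using summable_Suc_iff[of ?q] by (simp add: prob_cut_event)
    then have "(\<Sum>n. ennreal (?q n)) = ennreal (\<Sum>n. ?q n)"
      by (intro suminf_ennreal2) auto
    with assms show False by simp
  qed
qed

lemma liminf_kLambda_le:
  assumes "infinite {n. \<omega> \<in> cut_event (Suc n)}"
  shows "liminf (\<lambda>n. ereal (real (kLambda k (\<lambda>i m. X i m \<omega>) (int n)))) \<le> ereal (real k)"
proof (rule liminf_le_if_infinitely_le)
  have "Suc ` {n. \<omega> \<in> cut_event (Suc n)}
      \<subseteq> {n. ereal (real (kLambda k (\<lambda>i m. X i m \<omega>) (int n))) \<le> ereal (real k)}"
  proof clarify
    fix n assume "\<omega> \<in> cut_event (Suc n)"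
    then have "kLambda k (\<lambda>i m. X i m \<omega>) (int (Suc n)) \<le> k"
      by (intro kLambda_le_if_jumps_exceed) (auto simp: cut_event_def)
    then show "ereal (real (kLambda k (\<lambda>i m. X i m \<omega>) (int (Suc n)))) \<le> ereal (real k)"
      by simp
  qed
  moreover have "infinite (Suc ` {n. \<omega> \<in> cut_event (Suc n)})"
    using assms by (simp add: finite_image_iff)
  ultimately show "infinite {n. ereal (real (kLambda k (\<lambda>i m. X i m \<omega>) (int n))) \<le> ereal (real k)}"
    by (rule infinite_super)
qed

end

theorem mainTheorem15:
  fixes M :: "'a measure" and p :: "nat pmf" and k :: nat
    and X :: "nat \<Rightarrow> nat \<Rightarrow> 'a \<Rightarrow> nat"
  assumes "prob_space M"
    and "k \<ge> 2"
    and "0 \<notin> set_pmf p"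
    and "\<And>i n. i < k \<Longrightarrow> n \<ge> 1 \<Longrightarrow> X i n \<in> measurable M (count_space UNIV)"
    and "\<And>i n. i < k \<Longrightarrow> n \<ge> 1 \<Longrightarrow> distr M (count_space UNIV) (X i n) = measure_pmf p"
    and "prob_space.indep_vars M (\<lambda>_. count_space UNIV) (\<lambda>(i, n). X i n) ({..<k} \<times> {1..})"
    and "(\<integral>\<^sup>+ x. ennreal (real (Min (x ` {..<k}))) \<partial>measure_pmf (Pi_pmf {..<k} 1 (\<lambda>_. p))) = \<infinity>"
  shows "AE \<omega> in M. liminf (\<lambda>n::nat. ereal (real (kLambda k (\<lambda>i m. X i m \<omega>) (int n)))) < \<infinity>"
proof -
  interpret iid_array M k p X
    using assms(1,4-6) by (intro iid_array.intro iid_array_axioms.intro)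
  have "{..<k} \<noteq> {}"
    using assms(2) by (simp add: lessThan_empty_iff)
  from nn_integral_Min_Pi_pmf[OF finite_lessThan this] assms(7)
  have "(\<Sum>n. ennreal (measure_pmf.prob p {n<..} ^ k)) = \<infinity>"
    by (simp only: card_lessThan)
  then have "AE \<omega> in M. infinite {n. \<omega> \<in> cut_event (Suc n)}"
    by (rule AE_infinitely_many_cut_events)
  then show ?thesis
  proof (rule eventually_mono)
    fix \<omega> assume "infinite {n. \<omega> \<in> cut_event (Suc n)}"
    then have "liminf (\<lambda>n. ereal (real (kLambda k (\<lambda>i m. X i m \<omega>) (int n)))) \<le> ereal (real k)"
      by (rule liminf_kLambda_le)
    then show "liminf (\<lambda>n. ereal (real (kLambda k (\<lambda>i m. X i m \<omega>) (int n)))) < \<infinity>"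
      by (rule order_le_less_trans) simp
  qed
qed

end
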